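(* Let $A$ be a ring, $M$ a left $A$-module, and $F$ an additive subgroup of $M$. Then $W(F) \cap A^\times = (A(F) \cap A^\times)^{-1}$. Moreover, the multiplicative monoid $W(F) \cap A(F) = \{a \in A \mid (F :_M a) = F\}$ is the largest subset $T$ of $A$ for which $F$ is both a $T$-submodule and a $T$-factroid of $M$.
   Context: Rings are unital, not necessarily commutative. For $a\in A$, $(F:_M a)=\{x\in M\mid ax\in F\}$. $W(F)=\{a\in A\mid (F:_M a)\subseteq F\}$ and $A(F)=\{a\in A\mid aF\subseteq F\}$. For $T\subseteq A$, a $T$-factroid of $M$ is an additive subgroup $F$ with $(F:_M t)\subseteq F$ for all $t\in T$, and a $T$-submodule of $M$ is an additive subgroup $F$ with $tF\subseteq F$ for all $t\in T$. For $X\subseteq A^\times$, $X^{-1}=\{x^{-1}\mid x\in X\}$. *)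

theory Defs
  imports Main
begin

text \<open>A ring A is modelled by a type of class ring_1 (unital, not necessarily
commutative); a left A-module M is an abelian group type 'm with a scalar
multiplication satisfying the left module axioms.\<close>

definition left_module :: "('a::ring_1 \<Rightarrow> 'm::ab_group_add \<Rightarrow> 'm) \<Rightarrow> bool" where
  "left_module sc \<longleftrightarrow>
     (\<forall>a x y. sc a (x + y) = sc a x + sc a y) \<and>
     (\<forall>a b x. sc (a + b) x = sc a x + sc b x) \<and>
     (\<forall>a b x. sc (a * b) x = sc a (sc b x)) \<and>
     (\<forall>x. sc 1 x = x)"

definition add_subgroup :: "'m::ab_group_add set \<Rightarrow> bool" where
  "add_subgroup F \<longleftrightarrow> 0 \<in> F \<and> (\<forall>x\<in>F. \<forall>y\<in>F. x + y \<in> F) \<and> (\<forall>x\<in>F. - x \<in> F)"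

definition colon :: "('a \<Rightarrow> 'm \<Rightarrow> 'm) \<Rightarrow> 'm set \<Rightarrow> 'a \<Rightarrow> 'm set" where
  "colon sc F a = {x. sc a x \<in> F}"

definition Wset :: "('a \<Rightarrow> 'm \<Rightarrow> 'm) \<Rightarrow> 'm set \<Rightarrow> 'a set" where
  "Wset sc F = {a. colon sc F a \<subseteq> F}"

definition Aset :: "('a \<Rightarrow> 'm \<Rightarrow> 'm) \<Rightarrow> 'm set \<Rightarrow> 'a set" where
  "Aset sc F = {a. sc a ` F \<subseteq> F}"

definition T_factroid :: "('a \<Rightarrow> 'm::ab_group_add \<Rightarrow> 'm) \<Rightarrow> 'a set \<Rightarrow> 'm set \<Rightarrow> bool" where
  "T_factroid sc T F \<longleftrightarrow> add_subgroup F \<and> (\<forall>t\<in>T. colon sc F t \<subseteq> F)"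

definition T_submodule :: "('a \<Rightarrow> 'm::ab_group_add \<Rightarrow> 'm) \<Rightarrow> 'a set \<Rightarrow> 'm set \<Rightarrow> bool" where
  "T_submodule sc T F \<longleftrightarrow> add_subgroup F \<and> (\<forall>t\<in>T. sc t ` F \<subseteq> F)"

definition ring_units :: "'a::ring_1 set" where
  "ring_units = {a. \<exists>b. a * b = 1 \<and> b * a = 1}"

definition unit_inv :: "'a::ring_1 \<Rightarrow> 'a" where
  "unit_inv a = (THE b. a * b = 1 \<and> b * a = 1)"

definition inv_set :: "'a::ring_1 set \<Rightarrow> 'a set" where
  "inv_set X = unit_inv ` X"

end

theory Submission
  imports Defs
begin

text \<open>For a unit u with inverse v, the module axioms give (F :_M u) = v F. Hence
(F :_M u) \<subseteq> F iff v F \<subseteq> F, which is the first claim. The rest is bookkeeping: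
a \<in> A(F) says F \<subseteq> (F :_M a), so W(F) \<inter> A(F) consists of the a with (F :_M a) = F,
and (F :_M ab) = ((F :_M a) :_M b) makes this set a monoid.\<close>

lemma left_module_mult:
  "left_module sc \<Longrightarrow> sc (a * b) x = sc a (sc b x)"
  unfolding left_module_def by blast

lemma left_module_one:
  "left_module sc \<Longrightarrow> sc 1 x = x"
  unfolding left_module_def by blast

lemma unit_inv_eq:
  fixes a b :: "'a::ring_1"
  assumes "a * b = 1" "b * a = 1"
  shows "unit_inv a = b"
  unfolding unit_inv_def
proof (rule the_equality)
  show "a * b = 1 \<and> b * a = 1" using assms by simp
  fix c assume c: "a * c = 1 \<and> c * a = 1"
  have "c = (b * a) * c" using assms by simp
  also have "\<dots> = b * (a * c)" by (simp add: mult.assoc)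
  also have "\<dots> = b" using c by simp
  finally show "c = b" .
qed

lemma mem_inv_set_iff:
  fixes X :: "'a::ring_1 set"
  assumes "X \<subseteq> ring_units"
  shows "u \<in> inv_set X \<longleftrightarrow> (\<exists>v\<in>X. u * v = 1 \<and> v * u = 1)"
proof
  assume "u \<in> inv_set X"
  then obtain v where v: "v \<in> X" "u = unit_inv v" unfolding inv_set_def by blast
  then obtain w where vw: "v * w = 1" "w * v = 1" using assms by (auto simp: ring_units_def)
  then show "\<exists>v\<in>X. u * v = 1 \<and> v * u = 1" using v unit_inv_eq[OF vw] by auto
next
  assume "\<exists>v\<in>X. u * v = 1 \<and> v * u = 1"
  then obtain v where "v \<in> X" "v * u = 1" "u * v = 1" by blast
  then show "u \<in> inv_set X" unfolding inv_set_def using unit_inv_eq by blast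
qed

lemma Aset_iff_subset_colon: "a \<in> Aset sc F \<longleftrightarrow> F \<subseteq> colon sc F a"
  unfolding Aset_def colon_def by auto

lemma Wset_iff_colon_subset: "a \<in> Wset sc F \<longleftrightarrow> colon sc F a \<subseteq> F"
  unfolding Wset_def by auto

lemma colon_unit:
  assumes lm: "left_module sc" and uv: "u * v = 1" "v * u = 1"
  shows "colon sc F u = sc v ` F"
proof
  show "colon sc F u \<subseteq> sc v ` F"
  proof
    fix x assume "x \<in> colon sc F u"
    moreover have "x = sc v (sc u x)"
      using uv by (simp add: left_module_mult[OF lm, symmetric] left_module_one[OF lm])
    ultimately show "x \<in> sc v ` F" unfolding colon_def by blast
  qed
  show "sc v ` F \<subseteq> colon sc F u"
    using uv by (auto simp: colon_def left_module_mult[OF lm, symmetric] left_module_one[OF lm])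
qed

lemma Wset_Int_units_eq_inv_set:
  assumes "left_module sc"
  shows "Wset sc F \<inter> ring_units = inv_set (Aset sc F \<inter> ring_units)"
proof -
  have W_iff_A: "u \<in> Wset sc F \<longleftrightarrow> v \<in> Aset sc F" if "u * v = 1" "v * u = 1" for u v
    using colon_unit[OF assms that] by (simp add: Wset_iff_colon_subset Aset_def)
  have "Aset sc F \<inter> ring_units \<subseteq> ring_units" by blast
  from mem_inv_set_iff[OF this] show ?thesis
    unfolding set_eq_iff using W_iff_A by (auto simp: ring_units_def)
qed

lemma Wset_Int_Aset_eq: "Wset sc F \<inter> Aset sc F = {a. colon sc F a = F}"
  by (auto simp: Wset_iff_colon_subset Aset_iff_subset_colon)

lemma colon_one: "left_module sc \<Longrightarrow> colon sc F 1 = F"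
  by (simp add: colon_def left_module_one)

lemma colon_mult: "left_module sc \<Longrightarrow> colon sc F (a * b) = colon sc (colon sc F a) b"
  by (simp add: colon_def left_module_mult)

lemma T_submodule_and_T_factroid_iff:
  assumes "add_subgroup F"
  shows "T_submodule sc T F \<and> T_factroid sc T F \<longleftrightarrow> T \<subseteq> Wset sc F \<inter> Aset sc F"
  using assms unfolding T_submodule_def T_factroid_def Wset_def Aset_def by blast

theorem proposition3p9:
  fixes sc :: "'a::ring_1 \<Rightarrow> 'm::ab_group_add \<Rightarrow> 'm"
    and F :: "'m set"
  assumes "left_module sc"
    and "add_subgroup F"
  shows "Wset sc F \<inter> ring_units = inv_set (Aset sc F \<inter> ring_units)
    \<and> Wset sc F \<inter> Aset sc F = {a. colon sc F a = F}
    \<and> 1 \<in> Wset sc F \<inter> Aset sc F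
    \<and> (\<forall>a\<in>Wset sc F \<inter> Aset sc F. \<forall>b\<in>Wset sc F \<inter> Aset sc F.
           a * b \<in> Wset sc F \<inter> Aset sc F)
    \<and> (\<forall>T. (T_submodule sc T F \<and> T_factroid sc T F) \<longleftrightarrow> T \<subseteq> Wset sc F \<inter> Aset sc F)"
proof (intro conjI ballI allI)
  show "Wset sc F \<inter> ring_units = inv_set (Aset sc F \<inter> ring_units)"
    using assms(1) by (rule Wset_Int_units_eq_inv_set)
  show "Wset sc F \<inter> Aset sc F = {a. colon sc F a = F}"
    by (rule Wset_Int_Aset_eq)
  show "1 \<in> Wset sc F \<inter> Aset sc F"
    by (simp add: Wset_Int_Aset_eq colon_one[OF assms(1)])
  show "a * b \<in> Wset sc F \<inter> Aset sc F"
    if "a \<in> Wset sc F \<inter> Aset sc F" "b \<in> Wset sc F \<inter> Aset sc F" for a b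
    using that by (simp add: Wset_Int_Aset_eq colon_mult[OF assms(1)])
  show "T_submodule sc T F \<and> T_factroid sc T F \<longleftrightarrow> T \<subseteq> Wset sc F \<inter> Aset sc F" for T
    using assms(2) by (rule T_submodule_and_T_factroid_iff)
qed

end
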